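(* Let $q=p^e$ with $p$ an odd prime and $e\ge1$, let $m\ge3$ be odd, $s\in\mathbb{F}_q^*$, $b\in\mathbb{F}_{q^m}^*$, and $l=\frac{e(p-1)(m+3)}{4}$. Let $N_s$ be the number of $x\in\mathbb{F}_{q^m}$ with $\mathrm{Tr}_{q^m/q}(bx)=s$ and $\mathrm{Tr}_{q^m/q}(x^2)=0$. Then $N_s=q^{m-2}$ if $\mathrm{Tr}_{q^m/q}(b^2)=0$, and $N_s=q^{m-2}-(-1)^l\eta(\mathrm{Tr}_{q^m/q}(b^2))q^{\frac{m-3}{2}}$ if $\mathrm{Tr}_{q^m/q}(b^2)\ne0$.
   Context: $\mathrm{Tr}_{q^m/q}$ is the trace map from $\mathbb{F}_{q^m}$ to $\mathbb{F}_q$; $\eta$ is the quadratic multiplicative character of $\mathbb{F}_q$. *)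

theory Defs
  imports Main "HOL-Computational_Algebra.Primes"
begin

text \<open>Model: the field F_{q^m} is a finite field type 'a with CARD('a) = q^m;
  F_q is its unique subfield {y. y^q = y}.\<close>

definition subfield_q :: "nat \<Rightarrow> 'a::field set" where
  "subfield_q q = {y. y ^ q = y}"

definition trace_qm :: "nat \<Rightarrow> nat \<Rightarrow> 'a::field \<Rightarrow> 'a" where
  "trace_qm q m x = (\<Sum>i<m. x ^ (q ^ i))"

definition eta_q :: "nat \<Rightarrow> 'a::field \<Rightarrow> int" where
  "eta_q q a = (if a = 0 then 0
               else if (\<exists>y \<in> subfield_q q. y ^ 2 = a) then 1 else -1)"

end

theory Submission
  imports Defs "Jordan_Normal_Form.Determinant" "HOL-Computational_Algebra.Polynomial"
begin

(* Write t = Tr(b^2) and Q(x) = Tr(x^2), a quadratic form on F_{q^m} over F_q with polar form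
   Tr(xy).  If t = 0, each line x + F_q b in the hyperplane Tr(bx) = s meets Q = 0 exactly once,
   since Q(x + l b) = Q(x) + 2 l s; so N = q^(m-1) / q.
   If t <> 0, translating by (s/t) b identifies the solutions with the y in the hyperplane b^perp
   with Q(y) = -s^2/t.  On b^perp, of even dimension 2k = m - 1, the nondegenerate form Q
   diagonalises as a_1 y_1^2 + ... + a_2k y_2k^2, and a Jacobi-sum recursion shows that such a form
   takes a nonzero value c exactly q^(2k-1) - eta((-1)^k a_1 ... a_2k) q^(k-1) times.
   The discriminant t a_1 ... a_2k of Q is det(M)^2 for the Moore matrix M of the orthogonal basis
   b, w_1, ..., w_2k; the Frobenius permutes the rows of M by an m-cycle, which is even as m is odd,
   so det M lies in F_q and eta(a_1 ... a_2k) = eta(t).  Finally Euler's criterion gives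
   eta(-1) = (-1)^((q-1)/2), which turns eta(-1)^k into (-1)^l. *)

lemma of_nat_card_UNIV_eq_0: "of_nat (card (UNIV :: 'a::{finite,ring_1} set)) = (0::'a)"
proof -
  have "(\<Sum>y\<in>UNIV. 1 + y) = (\<Sum>y\<in>(UNIV::'a set). y)"
    by (rule sum.reindex_bij_witness[of _ "\<lambda>y. y - 1" "\<lambda>y. 1 + y"]) auto
  then show ?thesis
    by (simp add: sum.distrib)
qed

lemma power_card_UNIV_eq_self: "(x::'a::{finite,field}) ^ card (UNIV :: 'a set) = x"
proof (cases "x = 0")
  case False
  let ?U = "UNIV - {0::'a}"
  have "(\<Prod>y\<in>?U. x * y) = \<Prod>?U"
    by (rule prod.reindex_bij_witness[of _ "\<lambda>y. y / x" "\<lambda>y. x * y"]) (use False in auto)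
  then have "x ^ card ?U * \<Prod>?U = 1 * \<Prod>?U"
    by (simp add: prod.distrib)
  then have "x ^ card ?U = 1"
    by (subst (asm) mult_right_cancel) auto
  moreover have "card (UNIV :: 'a set) = Suc (card ?U)"
    using card_Diff_singleton[OF UNIV_I, of "0::'a"] finite_UNIV_card_ge_0[OF finite_UNIV]
    by (metis Suc_diff_1)
  ultimately show ?thesis
    by (simp only: power_Suc mult_1_right)
qed (use finite_UNIV_card_ge_0[where 'a = 'a] in simp)

lemma card_fiber_eq_card_kernel:
  fixes f :: "'a::{finite,ab_group_add} \<Rightarrow> 'b::ab_group_add"
  assumes add: "\<And>x y. f (x + y) = f x + f y" and c: "c \<in> range f"
  shows "card {x. f x = c} = card {x. f x = 0}"
proof -
  obtain a where a: "f a = c"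
    using c by auto
  have diff: "f (x - y) = f x - f y" for x y
    using add[of "x - y" y] by (simp add: algebra_simps)
  have "{x. f x = c} = (\<lambda>z. a + z) ` {x. f x = 0}"
  proof (intro equalityI subsetI)
    fix x assume "x \<in> {x. f x = c}"
    then show "x \<in> (\<lambda>z. a + z) ` {x. f x = 0}"
      using a diff[of x a] by (intro image_eqI[of _ _ "x - a"]) auto
  next
    fix x assume "x \<in> (\<lambda>z. a + z) ` {x. f x = 0}"
    then show "x \<in> {x. f x = c}"
      using a add by auto
  qed
  then show ?thesis
    by (simp add: card_image inj_on_def)
qed

lemma card_UNIV_eq_card_range_mult_card_kernel:
  fixes f :: "'a::{finite,ab_group_add} \<Rightarrow> 'b::ab_group_add"
  assumes add: "\<And>x y. f (x + y) = f x + f y"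
  shows "card (UNIV :: 'a set) = card (range f) * card {x. f x = 0}"
proof -
  have "card (UNIV :: 'a set) = (\<Sum>y\<in>range f. \<Sum>x\<in>{x \<in> UNIV. f x = y}. 1)"
    by (subst sum.group) auto
  also have "\<dots> = (\<Sum>y\<in>range f. card {x. f x = 0})"
    by (rule sum.cong) (auto simp: card_fiber_eq_card_kernel[OF add])
  finally show ?thesis
    by simp
qed

definition shift_cycle :: "nat \<Rightarrow> nat \<Rightarrow> nat" where
  "shift_cycle n k = (if Suc k < n then Suc k else if Suc k = n then 0 else k)"

lemma shift_cycle_1: "shift_cycle 1 = id"
  by (rule ext) (simp add: shift_cycle_def)

lemma shift_cycle_Suc:
  "n \<ge> 1 \<Longrightarrow> shift_cycle (Suc n) = shift_cycle n \<circ> Transposition.transpose (n - 1) n"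
  by (auto simp: shift_cycle_def fun_eq_iff Transposition.transpose_def)

lemma shift_cycle_permutes: "n \<ge> 1 \<Longrightarrow> shift_cycle n permutes {0..<n}"
proof (induction n rule: nat_induct_at_least)
  case base
  show ?case
    unfolding shift_cycle_1 by (rule permutes_id)
next
  case (Suc n)
  have "Transposition.transpose (n - 1) n permutes {0..<Suc n}"
    by (rule permutes_swap_id) auto
  moreover have "shift_cycle n permutes {0..<Suc n}"
    using Suc.IH by (rule permutes_subset) auto
  ultimately show ?case
    unfolding shift_cycle_Suc[OF Suc.hyps] by (rule permutes_compose)
qed

lemma evenperm_shift_cycle: "n \<ge> 1 \<Longrightarrow> evenperm (shift_cycle n) \<longleftrightarrow> odd n"
proof (induction n rule: nat_induct_at_least)
  case base
  show ?case
    unfolding shift_cycle_1 by (simp add: evenperm_id)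
next
  case (Suc n)
  have "permutation (shift_cycle n)"
    using shift_cycle_permutes[OF Suc.hyps] permutation_permutes by blast
  then have "evenperm (shift_cycle (Suc n))
      \<longleftrightarrow> (evenperm (shift_cycle n) \<longleftrightarrow> evenperm (Transposition.transpose (n - 1) n))"
    unfolding shift_cycle_Suc[OF Suc.hyps] by (rule evenperm_comp) (rule permutation_swap_id)
  moreover have "n - 1 \<noteq> n"
    using Suc.hyps by simp
  ultimately show ?case
    using Suc.IH by (simp add: evenperm_swap)
qed

lemma minus_one_power_half_pred_power:
  assumes "odd (p::nat)"
  shows "(- 1 :: int) ^ ((p ^ e - 1) div 2) = (- 1) ^ (e * ((p - 1) div 2))"
proof (induction e)
  case (Suc e)
  obtain u where u: "p = 2 * u + 1"
    using assms oddE by blast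
  have "odd (p ^ e)"
    using assms by simp
  then obtain A where A: "p ^ e = 2 * A + 1"
    using oddE by blast
  have "p ^ Suc e - 1 = 2 * (p * A + u)"
    using u A by (simp add: algebra_simps)
  then have "(- 1 :: int) ^ ((p ^ Suc e - 1) div 2) = ((- 1) ^ p) ^ A * (- 1) ^ u"
    by (simp add: power_add power_mult)
  also have "\<dots> = (- 1) ^ (e * u) * (- 1) ^ u"
    using assms Suc.IH A u by simp
  finally show ?case
    using u by (simp add: power_add)
qed simp

locale finite_field_extension =
  fixes p e m q :: nat and K :: "'a::{finite,field} set"
  assumes prime_p: "prime p" and e_pos: "e \<ge> 1" and q_def: "q = p ^ e"
    and m_pos: "m \<ge> 1" and card_UNIV: "card (UNIV :: 'a set) = q ^ m"
    and K_def: "K = subfield_q q"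
begin

abbreviation Tr :: "'a \<Rightarrow> 'a" where
  "Tr \<equiv> trace_qm q m"

lemma CHAR_eq: "CHAR('a) = p"
proof -
  have "(of_nat p :: 'a) ^ (e * m) = 0"
    using of_nat_card_UNIV_eq_0[where 'a = 'a] card_UNIV q_def by (simp add: power_mult)
  then have "CHAR('a) dvd p"
    using e_pos m_pos by (simp add: of_nat_eq_0_iff_char_dvd)
  with prime_p have "CHAR('a) = 1 \<or> CHAR('a) = p"
    unfolding prime_nat_iff by blast
  then show ?thesis
    by auto
qed

lemma q_gt_1: "q > 1"
  unfolding q_def using e_pos by (intro one_less_power prime_gt_1_nat[OF prime_p]) auto

lemma frobenius_add: "(x + y) ^ (q ^ i) = x ^ (q ^ i) + (y ^ (q ^ i) :: 'a)"
  using freshmans_dream'[of "q ^ i" "e * i" x y] CHAR_eq prime_p q_def by (simp add: power_mult)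

lemma frobenius_sum: "sum f A ^ (q ^ i) = (\<Sum>j\<in>A. f j ^ (q ^ i) :: 'a)"
  using freshmans_dream_sum'[of "q ^ i" "e * i" f A] CHAR_eq prime_p q_def by (simp add: power_mult)

lemma frobenius_uminus: "(- x) ^ (q ^ i) = - (x ^ (q ^ i) :: 'a)"
proof -
  have "x ^ (q ^ i) + (- x) ^ (q ^ i) = 0"
    using frobenius_add[of x "- x" i] q_gt_1 by (simp add: power_0_left)
  then show ?thesis
    by (simp add: eq_neg_iff_add_eq_0 add.commute)
qed

lemma power_q_power_m: "x ^ (q ^ m) = (x :: 'a)"
  using power_card_UNIV_eq_self[of x] card_UNIV by simp

lemma mem_K_iff: "x \<in> K \<longleftrightarrow> x ^ q = x"
  by (simp add: K_def subfield_q_def)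

lemma K_power_q_power: "x \<in> K \<Longrightarrow> x ^ (q ^ i) = x"
proof (induction i)
  case (Suc i)
  have "x ^ (q ^ Suc i) = (x ^ q) ^ (q ^ i)"
    by (simp add: power_mult[symmetric] mult.commute)
  with Suc show ?case
    by (simp add: mem_K_iff)
qed simp

lemma K_zero [simp]: "0 \<in> K" and K_one [simp]: "1 \<in> K"
  using q_gt_1 by (simp_all add: mem_K_iff)

lemma K_add [intro]: "x \<in> K \<Longrightarrow> y \<in> K \<Longrightarrow> x + y \<in> K"
  using frobenius_add[of x y 1] by (simp add: mem_K_iff)

lemma K_uminus [intro]: "x \<in> K \<Longrightarrow> - x \<in> K"
  using frobenius_uminus[of x 1] by (simp add: mem_K_iff)

lemma K_diff [intro]: "x \<in> K \<Longrightarrow> y \<in> K \<Longrightarrow> x - y \<in> K"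
  by (metis K_add K_uminus diff_conv_add_uminus)

lemma K_mult [intro]: "x \<in> K \<Longrightarrow> y \<in> K \<Longrightarrow> x * y \<in> K"
  by (simp add: mem_K_iff power_mult_distrib)

lemma K_inverse [intro]: "x \<in> K \<Longrightarrow> inverse x \<in> K"
  by (simp add: mem_K_iff power_inverse)

lemma K_divide [intro]: "x \<in> K \<Longrightarrow> y \<in> K \<Longrightarrow> x / y \<in> K"
  by (simp add: divide_inverse K_mult K_inverse)

lemma K_power [intro]: "x \<in> K \<Longrightarrow> x ^ n \<in> K"
  by (induction n) auto

lemma prod_list_in_K: "set xs \<subseteq> K \<Longrightarrow> prod_list xs \<in> K"
  by (induction xs) auto

lemma K_numeral [intro]: "numeral n \<in> K"
proof -
  have "of_nat k \<in> K" for k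
    by (induction k) auto
  from this[of "numeral n"] show ?thesis
    by simp
qed

lemma Tr_add: "Tr (x + y) = Tr x + Tr y"
  unfolding trace_qm_def by (simp add: frobenius_add sum.distrib)

lemma Tr_zero [simp]: "Tr 0 = 0"
  unfolding trace_qm_def using q_gt_1 by (simp add: power_0_left)

lemma Tr_mult_K: "c \<in> K \<Longrightarrow> Tr (c * x) = c * Tr x"
  unfolding trace_qm_def by (simp add: power_mult_distrib K_power_q_power sum_distrib_left)

lemma Tr_in_K [intro]: "Tr x \<in> K"
proof -
  obtain n where n: "m = Suc n"
    using m_pos by (cases m) auto
  have "Tr x ^ q = (\<Sum>i<m. x ^ q ^ Suc i)"
    unfolding trace_qm_def using frobenius_sum[of "\<lambda>i. x ^ q ^ i" "{..<m}" 1]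
    by (simp add: power_mult[symmetric] mult.commute)
  also have "\<dots> = (\<Sum>i<n. x ^ q ^ Suc i) + x ^ q ^ 0"
    using n power_q_power_m by simp
  also have "\<dots> = Tr x"
    unfolding trace_qm_def n sum.lessThan_Suc_shift by simp
  finally show ?thesis
    by (simp add: mem_K_iff)
qed

lemma card_K_le: "card K \<le> q"
proof -
  let ?P = "monom (1::'a) q - [:0, 1:]"
  have "coeff ?P q = 1"
    using q_gt_1 by (simp add: coeff_pCons split: nat.split)
  then have "?P \<noteq> 0"
    by (metis coeff_0 zero_neq_one)
  moreover have "degree ?P \<le> q"
    using q_gt_1 by (intro degree_diff_le) (auto simp: degree_monom_le)
  moreover have "K = {x. poly ?P x = 0}"
    by (auto simp: mem_K_iff poly_monom)
  ultimately show ?thesis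
    using card_poly_roots_bound[of ?P] by simp
qed

lemma card_Tr_kernel_le: "card {x. Tr x = 0} \<le> q ^ (m - 1)"
proof -
  define P where "P = (\<Sum>i<m. monom (1::'a) (q ^ i))"
  have "q ^ i = q ^ (m - 1) \<longleftrightarrow> i = m - 1" for i
    using q_gt_1 by (simp add: power_inject_exp)
  then have "coeff P (q ^ (m - 1)) = (\<Sum>i\<in>{m - 1}. 1)"
    unfolding P_def coeff_sum coeff_monom
    by (intro sum.mono_neutral_cong_right) (use m_pos in auto)
  then have "P \<noteq> 0"
    by auto
  moreover have "degree P \<le> q ^ (m - 1)"
    unfolding P_def
  proof (rule degree_sum_le)
    fix i assume "i \<in> {..<m}"
    then have "q ^ i \<le> q ^ (m - 1)"
      using q_gt_1 by (intro power_increasing) auto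
    then show "degree (monom (1::'a) (q ^ i)) \<le> q ^ (m - 1)"
      using degree_monom_le order_trans by blast
  qed simp
  moreover have "poly P x = Tr x" for x
    unfolding P_def trace_qm_def by (simp add: poly_sum poly_monom)
  ultimately show ?thesis
    using card_poly_roots_bound[of P] by simp
qed

text \<open>The image of the trace lies in \<open>K\<close> and its kernel is the root set of a polynomial of
  degree \<open>q ^ (m - 1)\<close>; since the two cardinalities multiply to \<open>q ^ m\<close>, both bounds are sharp.\<close>

lemma range_Tr: "range Tr = K"
  and card_K: "card K = q"
  and card_Tr_kernel: "card {x. Tr x = 0} = q ^ (m - 1)"
proof -
  have sub: "range Tr \<subseteq> K"
    by auto
  have range_le: "card (range Tr) \<le> q"
    using card_mono[OF _ sub] card_K_le by simp
  have "q ^ m = q * q ^ (m - 1)"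
    using m_pos by (simp add: power_eq_if)
  moreover have "card (UNIV :: 'a set) = card (range Tr) * card {x. Tr x = 0}"
    by (rule card_UNIV_eq_card_range_mult_card_kernel) (rule Tr_add)
  ultimately have prod: "card (range Tr) * card {x. Tr x = 0} = q * q ^ (m - 1)"
    using card_UNIV by linarith
  have kernel_pos: "card {x. Tr x = 0} > 0"
    by (auto simp: card_gt_0_iff intro!: exI[of _ 0])
  have range_eq: "card (range Tr) = q"
  proof (rule ccontr)
    assume "card (range Tr) \<noteq> q"
    with range_le have "card (range Tr) * card {x. Tr x = 0} < q * q ^ (m - 1)"
      using card_Tr_kernel_le kernel_pos by (intro mult_less_le_imp_less) auto
    with prod show False
      by simp
  qed
  with prod q_gt_1 show "card {x. Tr x = 0} = q ^ (m - 1)"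
    by simp
  show "range Tr = K"
    using card_seteq[OF _ sub] card_K_le range_eq by simp
  with range_eq show "card K = q"
    by simp
qed

lemma card_Tr_fiber: "c \<in> K \<Longrightarrow> card {x. Tr x = c} = q ^ (m - 1)"
  using card_fiber_eq_card_kernel[of Tr c, OF Tr_add] range_Tr card_Tr_kernel by simp

lemma card_Tr_mult_fiber:
  assumes "b \<noteq> 0" and "c \<in> K"
  shows "card {x. Tr (b * x) = c} = q ^ (m - 1)"
proof -
  have "{x. Tr (b * x) = c} = (\<lambda>y. y / b) ` {y. Tr y = c}"
    using assms by (auto simp: image_iff intro!: exI[of _ "b * _"])
  moreover have "inj_on (\<lambda>y::'a. y / b) {y. Tr y = c}"
    using assms by (simp add: inj_on_def)
  ultimately show ?thesis
    using card_Tr_fiber[OF assms(2)] by (simp add: card_image)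
qed

lemma Tr_nondegenerate: "x \<noteq> 0 \<Longrightarrow> \<exists>y. Tr (x * y) \<noteq> 0"
proof -
  assume "x \<noteq> 0"
  obtain z where "Tr z = 1"
    using range_Tr K_one by (metis imageE)
  with \<open>x \<noteq> 0\<close> show ?thesis
    by (intro exI[of _ "z / x"]) simp
qed

end

fun diag_count :: "'a::field set \<Rightarrow> 'a list \<Rightarrow> 'a \<Rightarrow> nat" where
  "diag_count K [] c = (if c = 0 then 1 else 0)"
| "diag_count K (a # as) c = (\<Sum>y\<in>K. diag_count K as (c - a * y ^ 2))"

locale odd_finite_field_extension = finite_field_extension +
  assumes odd_p: "odd p"
begin

lemma odd_q: "odd q"
  using q_def odd_p by simp

lemma two_neq_zero: "(2::'a) \<noteq> 0"
proof
  assume "(2::'a) = 0"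
  then have "of_nat 2 = (0::'a)"
    by simp
  then have "p dvd 2"
    using of_nat_eq_0_iff_char_dvd CHAR_eq by metis
  then have "p \<le> 2"
    by (simp add: dvd_imp_le)
  with prime_ge_2_nat[OF prime_p] odd_p show False
    by (metis antisym even_numeral)
qed

lemma one_neq_minus_one: "(1::'a) \<noteq> - 1"
  using two_neq_zero by (metis one_add_one add_eq_0_iff)

lemma neq_uminus_self: "x \<noteq> 0 \<Longrightarrow> x \<noteq> - (x::'a)"
  using two_neq_zero by (metis add_eq_0_iff mult_2 mult_eq_0_iff)

abbreviation eta :: "'a \<Rightarrow> int" where
  "eta \<equiv> eta_q q"

lemma eta_eq: "eta a = (if a = 0 then 0 else if \<exists>y\<in>K. y ^ 2 = a then 1 else - 1)"
  by (simp add: eta_q_def K_def)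

lemma eta_zero [simp]: "eta 0 = 0"
  by (simp add: eta_eq)

lemma abs_eta_le_1: "\<bar>eta a\<bar> \<le> 1"
  by (simp add: eta_eq)

lemma eta_square: "c \<in> K \<Longrightarrow> c \<noteq> 0 \<Longrightarrow> eta (c ^ 2) = 1"
  by (auto simp: eta_eq)

lemma eta_mult_self: "a \<noteq> 0 \<Longrightarrow> eta a * eta a = 1"
  by (simp add: eta_eq)

lemma card_square_roots_K:
  assumes "a \<in> K"
  shows "int (card {y\<in>K. y ^ 2 = a}) = 1 + eta a"
proof -
  consider "a = 0" | "a \<noteq> 0" "\<exists>y\<in>K. y ^ 2 = a" | "\<not> (\<exists>y\<in>K. y ^ 2 = a)"
    by auto
  then show ?thesis
  proof cases
    case 1
    then have "{y\<in>K. y ^ 2 = a} = {0}"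
      by auto
    with 1 show ?thesis
      by simp
  next
    case 2
    then obtain y where y: "y \<in> K" "y ^ 2 = a" "y \<noteq> 0"
      by auto
    then have "{y\<in>K. y ^ 2 = a} = {y, - y}"
      by (auto simp: power2_eq_iff)
    with y 2 show ?thesis
      using neq_uminus_self[of y] by (simp add: eta_eq)
  next
    case 3
    then have "{y\<in>K. y ^ 2 = a} = {}" "a \<noteq> 0"
      using assms by auto
    with 3 show ?thesis
      by (simp add: eta_eq)
  qed
qed

lemma sum_eta_K: "(\<Sum>a\<in>K. eta a) = 0"
proof -
  have "(\<Sum>a\<in>K. 1 + eta a) = (\<Sum>a\<in>K. \<Sum>y\<in>{y\<in>K. y ^ 2 = a}. 1)"
    by (rule sum.cong) (simp_all flip: card_square_roots_K)
  also have "\<dots> = (\<Sum>y\<in>K. 1)"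
    by (rule sum.group) auto
  finally show ?thesis
    by (simp add: sum.distrib)
qed

definition half_q :: nat where
  "half_q = (q - 1) div 2"

lemma two_half_q: "2 * half_q = q - 1"
  using odd_q unfolding half_q_def by simp

lemma half_q_pos: "half_q \<ge> 1"
proof -
  have "q \<noteq> 2"
    using odd_q by auto
  with q_gt_1 two_half_q show ?thesis
    by presburger
qed

lemma card_eta_eq_1: "card {a\<in>K. eta a = 1} = half_q"
proof -
  let ?S = "{a\<in>K. eta a = 1}" and ?N = "{a\<in>K. eta a = - 1}"
  have K_split: "K = insert 0 (?S \<union> ?N)"
    by (auto simp: eta_eq)
  have disjoint: "?S \<inter> ?N = {}" "0 \<notin> ?S \<union> ?N"
    by auto
  have "0 = (\<Sum>a\<in>insert 0 (?S \<union> ?N). eta a)"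
    using sum_eta_K K_split by simp
  also have "\<dots> = int (card ?S) - int (card ?N)"
    using disjoint by (simp add: sum.union_disjoint)
  finally have "card ?S = card ?N"
    by simp
  moreover have "card (insert 0 (?S \<union> ?N)) = Suc (card ?S + card ?N)"
    using disjoint by (simp add: card_Un_disjoint)
  moreover have "card K = card (insert 0 (?S \<union> ?N))"
    using K_split by (rule arg_cong)
  ultimately show ?thesis
    using two_half_q card_K by simp
qed

lemma K_power_q_minus_1: "a \<in> K \<Longrightarrow> a \<noteq> 0 \<Longrightarrow> a ^ (q - 1) = 1"
  using q_gt_1 by (metis mem_K_iff mult_cancel_left1 power_eq_if not_one_less_zero)

lemma power_half_q_eq_1_of_eta_eq_1: "a \<in> K \<Longrightarrow> eta a = 1 \<Longrightarrow> a ^ half_q = 1"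
proof -
  assume "a \<in> K" "eta a = 1"
  then obtain y where y: "y \<in> K" "y ^ 2 = a" "y \<noteq> 0"
    by (auto simp: eta_eq split: if_splits)
  then have "a ^ half_q = y ^ (2 * half_q)"
    by (simp add: power_mult)
  with y two_half_q K_power_q_minus_1[of y] show ?thesis
    by simp
qed

text \<open>The \<open>half_q\<close> nonzero squares already exhaust the roots of \<open>X ^ half_q - 1\<close>.\<close>

lemma power_half_q_neq_1_of_eta_eq_minus_1:
  assumes "eta a = - 1"
  shows "a ^ half_q \<noteq> 1"
proof
  assume a_root: "a ^ half_q = 1"
  let ?P = "monom (1::'a) half_q - 1"
  have "coeff ?P half_q = 1"
    using half_q_pos by simp
  then have P_nz: "?P \<noteq> 0"
    by (metis coeff_0 zero_neq_one)
  have "insert a {b\<in>K. eta b = 1} \<subseteq> {x. poly ?P x = 0}"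
  proof
    fix x assume "x \<in> insert a {b\<in>K. eta b = 1}"
    then have "x ^ half_q = 1"
      using a_root power_half_q_eq_1_of_eta_eq_1 by blast
    then show "x \<in> {x. poly ?P x = 0}"
      by (simp only: mem_Collect_eq poly_diff poly_monom poly_1 mult_1 diff_self)
  qed
  then have "card (insert a {b\<in>K. eta b = 1}) \<le> card {x. poly ?P x = 0}"
    by (rule card_mono[OF poly_roots_finite[OF P_nz]])
  also have "\<dots> \<le> degree ?P"
    by (rule card_poly_roots_bound[OF P_nz])
  also have "degree ?P \<le> half_q"
    by (intro degree_diff_le) (auto simp: degree_monom_le)
  finally show False
    using assms card_eta_eq_1 by simp
qed

lemma euler_criterion:
  assumes "a \<in> K"
  shows "of_int (eta a) = a ^ half_q"
proof -
  consider "a = 0" | "eta a = 1" | "eta a = - 1"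
    by (cases "a = 0"; cases "\<exists>y\<in>K. y ^ 2 = a") (simp_all add: eta_eq)
  then show ?thesis
  proof cases
    case 1
    then show ?thesis
      using half_q_pos by simp
  next
    case 2
    then show ?thesis
      using power_half_q_eq_1_of_eta_eq_1 assms by simp
  next
    case 3
    then have "a \<noteq> 0"
      by auto
    have "(a ^ half_q) ^ 2 = a ^ (2 * half_q)"
      by (metis power_mult mult.commute)
    also have "\<dots> = 1"
      using assms \<open>a \<noteq> 0\<close> K_power_q_minus_1[of a] two_half_q by simp
    finally show ?thesis
      using power_half_q_neq_1_of_eta_eq_minus_1[OF 3] 3 by (simp add: power2_eq_1_iff)
  qed
qed

lemma of_int_sign_inj:
  assumes "\<bar>i\<bar> \<le> 1" and "\<bar>j\<bar> \<le> 1" and "of_int i = (of_int j :: 'a)"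
  shows "i = j"
proof -
  have "i \<in> {- 1, 0, 1}" "j \<in> {- 1, 0, 1}"
    using assms(1,2) by auto
  with assms(3) one_neq_minus_one show ?thesis
    by auto
qed

lemma eta_mult:
  assumes "a \<in> K" and "b \<in> K"
  shows "eta (a * b) = eta a * eta b"
proof (rule of_int_sign_inj)
  show "\<bar>eta (a * b)\<bar> \<le> 1" "\<bar>eta a * eta b\<bar> \<le> 1"
    using abs_eta_le_1 by (auto simp: abs_mult intro: mult_le_one)
  show "of_int (eta (a * b)) = (of_int (eta a * eta b) :: 'a)"
    using assms euler_criterion[of a] euler_criterion[of b] euler_criterion[of "a * b"]
    by (simp add: power_mult_distrib K_mult)
qed

lemma eta_minus_one: "eta (- 1) = (- 1) ^ half_q"
  by (rule of_int_sign_inj) (use euler_criterion[OF K_uminus[OF K_one]] abs_eta_le_1 in auto)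

lemma eta_one [simp]: "eta 1 = 1"
  using eta_square[of 1] by simp

lemma eta_power: "x \<in> K \<Longrightarrow> eta (x ^ n) = eta x ^ n"
  by (induction n) (simp_all add: eta_mult K_power)

lemma sum_K_square:
  fixes f :: "'a \<Rightarrow> int"
  shows "(\<Sum>y\<in>K. f (y ^ 2)) = (\<Sum>w\<in>K. (1 + eta w) * f w)"
proof -
  have "(\<Sum>y\<in>K. f (y ^ 2)) = (\<Sum>w\<in>K. of_nat (card {y\<in>K. y ^ 2 = w}) * f w)"
    by (rule sum_fun_comp) auto
  also have "\<dots> = (\<Sum>w\<in>K. (1 + eta w) * f w)"
    by (rule sum.cong) (simp_all add: card_square_roots_K)
  finally show ?thesis .
qed

lemma sum_K_affine:
  assumes "a \<in> K" and "a \<noteq> 0" and "c \<in> K"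
  shows "(\<Sum>w\<in>K. g (c - a * w)) = (\<Sum>u\<in>K. g u)"
  by (rule sum.reindex_bij_witness[of _ "\<lambda>u. (c - u) / a" "\<lambda>w. c - a * w"]) (use assms in auto)

lemma sum_eta_affine: "a \<in> K \<Longrightarrow> a \<noteq> 0 \<Longrightarrow> c \<in> K \<Longrightarrow> (\<Sum>w\<in>K. eta (c - a * w)) = 0"
  using sum_K_affine[of a c eta] sum_eta_K by simp

lemma jacobi_sum_eta:
  assumes a: "a \<in> K" "a \<noteq> 0" and c: "c \<in> K"
  shows "(\<Sum>w\<in>K. eta w * eta (c - a * w)) = eta (- a) * (if c = 0 then int q - 1 else - 1)"
proof -
  have "(\<Sum>w\<in>K. eta w * eta (c - a * w)) = (\<Sum>w\<in>K - {0}. eta w * eta (c - a * w))"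
    by (rule sum.mono_neutral_right) auto
  also have "\<dots> = (\<Sum>w\<in>K - {0}. eta (c / w - a))"
  proof (rule sum.cong)
    fix w assume w: "w \<in> K - {0}"
    have "eta w * eta (c - a * w) = eta (w * (c - a * w))"
      using w a c by (simp add: eta_mult K_diff K_mult)
    also have "w * (c - a * w) = w ^ 2 * (c / w - a)"
      using w by (simp add: field_simps power2_eq_square)
    also have "eta \<dots> = eta (w ^ 2) * eta (c / w - a)"
      using w a c by (intro eta_mult) auto
    finally show "eta w * eta (c - a * w) = eta (c / w - a)"
      using w by (simp add: eta_square)
  qed simp
  finally have jacobi: "(\<Sum>w\<in>K. eta w * eta (c - a * w)) = (\<Sum>w\<in>K - {0}. eta (c / w - a))" .
  show ?thesis
  proof (cases "c = 0")
    case True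
    with jacobi card_K q_gt_1 show ?thesis
      by (simp add: of_nat_diff)
  next
    case False
    have "(\<Sum>w\<in>K - {0}. eta (c / w - a)) = (\<Sum>u\<in>K - {0}. eta (u - a))"
      by (rule sum.reindex_bij_witness[of _ "\<lambda>u. c / u" "\<lambda>w. c / w"]) (use c False in auto)
    also have "\<dots> = (\<Sum>u\<in>K. eta (u - a)) - eta (0 - a)"
      by (simp add: sum_diff1)
    also have "(\<Sum>u\<in>K. eta (u - a)) = (\<Sum>v\<in>K. eta v)"
      by (rule sum.reindex_bij_witness[of _ "\<lambda>v. v + a" "\<lambda>u. u - a"]) (use a in auto)
    finally show ?thesis
      using jacobi False sum_eta_K by simp
  qed
qed

lemma diag_count_single:
  assumes "a \<in> K" and "a \<noteq> 0" and "u \<in> K"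
  shows "int (diag_count K [a] u) = 1 + eta (u * a)"
proof -
  have "int (diag_count K [a] u) = (\<Sum>y\<in>K. (\<lambda>w. if u - a * w = 0 then 1 else 0) (y ^ 2))"
    by (auto simp: of_nat_sum intro!: sum.cong)
  also have "\<dots> = (\<Sum>w\<in>K. (1 + eta w) * (if u - a * w = 0 then 1 else 0))"
    by (rule sum_K_square)
  also have "\<dots> = (\<Sum>w\<in>K. if w = u / a then 1 + eta w else 0)"
    by (rule sum.cong) (use assms in \<open>auto simp: field_simps\<close>)
  also have "\<dots> = 1 + eta (u / a)"
    using assms by (simp add: K_divide)
  also have "u / a = (u * a) * inverse a ^ 2"
    using assms by (simp add: field_simps power2_eq_square)
  also have "eta \<dots> = eta (u * a)"
    using assms by (simp add: eta_mult eta_square K_mult K_inverse K_power)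
  finally show ?thesis .
qed

lemma diag_count_pair:
  assumes a: "a \<in> K" "a \<noteq> 0" and b: "b \<in> K" "b \<noteq> 0" and c: "c \<in> K"
  shows "int (diag_count K [a, b] c) = int q + eta (- (a * b)) * (if c = 0 then int q - 1 else - 1)"
proof -
  have "int (diag_count K [a, b] c) = (\<Sum>y\<in>K. int (diag_count K [b] (c - a * y ^ 2)))"
    by (simp only: diag_count.simps(2) of_nat_sum)
  also have "\<dots> = (\<Sum>y\<in>K. 1 + eta b * eta (c - a * y ^ 2))"
  proof (rule sum.cong)
    fix y assume "y \<in> K"
    then have "c - a * y ^ 2 \<in> K"
      using a c by auto
    then show "int (diag_count K [b] (c - a * y ^ 2)) = 1 + eta b * eta (c - a * y ^ 2)"
      using diag_count_single[OF b] eta_mult[OF _ b(1)] by (simp add: mult.commute)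
  qed simp
  also have "\<dots> = int q + eta b * (\<Sum>y\<in>K. eta (c - a * y ^ 2))"
    using card_K by (simp add: sum.distrib sum_distrib_left)
  also have "(\<Sum>y\<in>K. eta (c - a * y ^ 2)) = (\<Sum>w\<in>K. (1 + eta w) * eta (c - a * w))"
    using sum_K_square[of "\<lambda>w. eta (c - a * w)"] by simp
  also have "\<dots> = (\<Sum>w\<in>K. eta w * eta (c - a * w))"
    using sum_eta_affine[OF a c] by (simp add: distrib_right sum.distrib)
  also have "\<dots> = eta (- a) * (if c = 0 then int q - 1 else - 1)"
    by (rule jacobi_sum_eta[OF a c])
  moreover have "eta (- (a * b)) = eta (- a) * eta b"
    using eta_mult[of "- a" b] a b by auto
  ultimately show ?thesis
    by (simp add: mult_ac)
qed

lemma diag_count_Cons_Cons: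
  assumes rest: "\<And>v. v \<in> K \<Longrightarrow> int (diag_count K as v) = \<alpha> + \<beta> * (if v = 0 then 1 else 0)"
    and "a \<in> K" and "b \<in> K" and "c \<in> K"
  shows "int (diag_count K (a # b # as) c) = int q ^ 2 * \<alpha> + \<beta> * int (diag_count K [a, b] c)"
proof -
  let ?P = "\<lambda>y z. c - a * y ^ 2 - b * z ^ 2 = 0"
  have "int (diag_count K (a # b # as) c) = (\<Sum>y\<in>K. \<Sum>z\<in>K. int (diag_count K as (c - a * y ^ 2 - b * z ^ 2)))"
    by (simp add: of_nat_sum)
  also have "\<dots> = (\<Sum>y\<in>K. \<Sum>z\<in>K. \<alpha> + \<beta> * (if ?P y z then 1 else 0))"
    using assms by (intro sum.cong refl rest) auto
  also have "\<dots> = int q ^ 2 * \<alpha> + \<beta> * (\<Sum>y\<in>K. \<Sum>z\<in>K. if ?P y z then 1 else 0)"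
    using card_K by (simp add: sum.distrib sum_distrib_left power2_eq_square)
  also have "(\<Sum>y\<in>K. \<Sum>z\<in>K. if ?P y z then 1 else 0) = int (diag_count K [a, b] c)"
    by (auto simp: of_nat_sum intro!: sum.cong)
  finally show ?thesis .
qed

lemma eta_sign_prod_list_Cons_Cons:
  assumes "set as \<subseteq> K" and "a \<in> K" and "b \<in> K"
  shows "eta ((- 1) ^ k * prod_list as) * eta (- (a * b)) = eta ((- 1) ^ Suc k * prod_list (a # b # as))"
proof -
  have "(- 1) ^ k * prod_list as \<in> K"
    using prod_list_in_K[OF assms(1)] by (intro K_mult K_power K_uminus K_one)
  then have "eta ((- 1) ^ k * prod_list as) * eta (- (a * b)) = eta ((- 1) ^ k * prod_list as * (- (a * b)))"
    using assms(2,3) by (intro eta_mult[symmetric]) auto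
  also have "(- 1) ^ k * prod_list as * (- (a * b)) = (- 1) ^ Suc k * prod_list (a # b # as)"
    by (simp add: algebra_simps)
  finally show ?thesis .
qed

lemma diag_count_even:
  assumes "k \<ge> 1" and "length as = 2 * k" and "set as \<subseteq> K - {0}" and "c \<in> K"
  shows "int (diag_count K as c) = int q ^ (2 * k - 1)
    + eta ((- 1) ^ k * prod_list as) * (if c = 0 then int q - 1 else - 1) * int q ^ (k - 1)"
  using assms
proof (induction k arbitrary: as c rule: nat_induct_at_least)
  case base
  then obtain a b where "as = [a, b]"
    by (auto simp: numeral_2_eq_2 length_Suc_conv)
  with base.prems diag_count_pair[of a b c] show ?case
    by simp
next
  case (Suc k)
  then obtain a b rest where as: "as = a # b # rest" and rest: "length rest = 2 * k"
    by (auto simp: numeral_2_eq_2 length_Suc_conv)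
  have ab: "a \<in> K" "a \<noteq> 0" "b \<in> K" "b \<noteq> 0" and rest_K: "set rest \<subseteq> K - {0}"
    using Suc.prems as by auto
  define E where "E = eta ((- 1) ^ k * prod_list rest)"
  obtain j where k: "k = Suc j"
    using Suc.hyps by (cases k) auto
  have rest_count: "int (diag_count K rest v)
      = (int q ^ (2 * k - 1) - E * int q ^ (k - 1)) + E * int q ^ k * (if v = 0 then 1 else 0)"
    if "v \<in> K" for v
    using Suc.IH[OF rest rest_K that] unfolding E_def k by (simp add: algebra_simps)
  define X where "X = (if c = 0 then int q - 1 else - 1)"
  have main: "int (diag_count K as c) = int q ^ 2 * (int q ^ (2 * k - 1) - E * int q ^ (k - 1))
      + E * int q ^ k * (int q + eta (- (a * b)) * X)"
    using diag_count_Cons_Cons[of rest, OF rest_count] diag_count_pair[of a b c] ab Suc.prems(3) as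
    unfolding X_def by simp
  have E_Suc: "E * eta (- (a * b)) = eta ((- 1) ^ Suc k * prod_list as)"
    unfolding E_def as using rest_K ab by (intro eta_sign_prod_list_Cons_Cons) auto
  have "int (diag_count K as c) = int q ^ (2 * Suc k - 1) + E * eta (- (a * b)) * X * int q ^ (Suc k - 1)"
    unfolding main k by (simp add: algebra_simps power2_eq_square)
  then show ?case
    unfolding E_Suc X_def .
qed

definition K_subspace :: "'a set \<Rightarrow> bool" where
  "K_subspace W \<longleftrightarrow> 0 \<in> W \<and> (\<forall>x\<in>W. \<forall>y\<in>W. x + y \<in> W) \<and> (\<forall>c\<in>K. \<forall>x\<in>W. c * x \<in> W)"

definition Tr_nondegenerate_on :: "'a set \<Rightarrow> bool" where
  "Tr_nondegenerate_on W \<longleftrightarrow> (\<forall>x\<in>W. (\<forall>y\<in>W. Tr (x * y) = 0) \<longrightarrow> x = 0)"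

definition Tr_orthogonal :: "'a list \<Rightarrow> bool" where
  "Tr_orthogonal ws \<longleftrightarrow> (\<forall>i<length ws. \<forall>j<length ws. i \<noteq> j \<longrightarrow> Tr (ws ! i * ws ! j) = 0)"

definition Tr_perp :: "'a set \<Rightarrow> 'a \<Rightarrow> 'a set" where
  "Tr_perp W w = {y\<in>W. Tr (w * y) = 0}"

lemma K_subspace_UNIV: "K_subspace UNIV"
  by (simp add: K_subspace_def)

lemma Tr_nondegenerate_on_UNIV: "Tr_nondegenerate_on UNIV"
  using Tr_nondegenerate by (auto simp: Tr_nondegenerate_on_def)

lemma Tr_orthogonal_Cons:
  assumes "Tr_orthogonal ws" and "\<forall>v\<in>set ws. Tr (w * v) = 0"
  shows "Tr_orthogonal (w # ws)"
  unfolding Tr_orthogonal_def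
proof (intro allI impI)
  fix i j
  assume ij: "i < length (w # ws)" "j < length (w # ws)" "i \<noteq> j"
  have orth_w: "Tr (w * v) = 0" "Tr (v * w) = 0" if "v \<in> set ws" for v
    using assms(2) that by (auto simp: mult.commute)
  show "Tr ((w # ws) ! i * (w # ws) ! j) = 0"
  proof (cases i; cases j)
    fix j' assume "i = 0" "j = Suc j'"
    with ij orth_w show ?thesis
      by simp
  next
    fix i' assume "i = Suc i'" "j = 0"
    with ij orth_w show ?thesis
      by simp
  next
    fix i' j' assume "i = Suc i'" "j = Suc j'"
    with ij assms(1) show ?thesis
      by (simp add: Tr_orthogonal_def)
  qed (use ij in simp)
qed

lemma Tr_square_add: "Tr ((x + y) ^ 2) = Tr (x ^ 2) + 2 * Tr (x * y) + Tr (y ^ 2)"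
proof -
  have "(x + y) ^ 2 = x ^ 2 + 2 * (x * y) + y ^ 2"
    by (simp add: power2_eq_square algebra_simps)
  moreover have "Tr (2 * z) = 2 * Tr z" for z
    by (simp only: mult_2 Tr_add)
  ultimately show ?thesis
    by (simp add: Tr_add)
qed

lemma Tr_mult_add_scaled: "c \<in> K \<Longrightarrow> Tr (w * (y + c * w)) = Tr (w * y) + c * Tr (w ^ 2)"
proof -
  assume "c \<in> K"
  have "w * (y + c * w) = w * y + c * w ^ 2"
    by (simp add: algebra_simps power2_eq_square)
  with \<open>c \<in> K\<close> show ?thesis
    by (simp add: Tr_add Tr_mult_K)
qed

lemma Tr_square_add_scaled:
  assumes "c \<in> K"
  shows "Tr ((y + c * w) ^ 2) = Tr (y ^ 2) + 2 * c * Tr (w * y) + c ^ 2 * Tr (w ^ 2)"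
proof -
  have "Tr (y * (c * w)) = Tr (c * (w * y))"
    by (simp add: ac_simps)
  also have "\<dots> = c * Tr (w * y)"
    using assms by (rule Tr_mult_K)
  finally have "Tr (y * (c * w)) = c * Tr (w * y)" .
  moreover have "Tr ((c * w) ^ 2) = c ^ 2 * Tr (w ^ 2)"
    using assms by (simp add: power_mult_distrib Tr_mult_K K_power)
  ultimately show ?thesis
    using Tr_square_add[of y "c * w"] by (simp add: mult.assoc)
qed

lemma exists_Tr_square_nonzero:
  assumes W: "K_subspace W" "Tr_nondegenerate_on W" and "card W > 1"
  shows "\<exists>w\<in>W. Tr (w ^ 2) \<noteq> 0"
proof (rule ccontr)
  assume "\<not> ?thesis"
  then have isotropic: "\<forall>w\<in>W. Tr (w ^ 2) = 0"
    by simp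
  have "\<not> W \<subseteq> {0}"
    using card_mono[of "{0}" W] \<open>card W > 1\<close> by auto
  then obtain x where x: "x \<in> W" "x \<noteq> 0"
    by blast
  then obtain y where y: "y \<in> W" "Tr (x * y) \<noteq> 0"
    using W(2) unfolding Tr_nondegenerate_on_def by blast
  have "x + y \<in> W"
    using W(1) x(1) y(1) unfolding K_subspace_def by blast
  then have "2 * Tr (x * y) = 0"
    using Tr_square_add[of x y] isotropic x(1) y(1) by simp
  with y(2) two_neq_zero show False
    by simp
qed

context
  fixes W :: "'a set" and w :: 'a
  assumes W: "K_subspace W" and w: "w \<in> W" "Tr (w ^ 2) \<noteq> 0"
begin

lemma K_subspace_Tr_perp: "K_subspace (Tr_perp W w)"
  using W unfolding K_subspace_def Tr_perp_def
  by (auto simp: distrib_left Tr_add mult.left_commute Tr_mult_K)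

lemma Tr_perp_projection:
  assumes "x \<in> W"
  shows "x + (- (Tr (w * x) / Tr (w ^ 2))) * w \<in> Tr_perp W w"
proof -
  let ?c = "- (Tr (w * x) / Tr (w ^ 2))"
  have c: "?c \<in> K"
    by auto
  have "x + ?c * w \<in> W"
    using W w(1) assms c unfolding K_subspace_def by blast
  moreover have "Tr (w * (x + ?c * w)) = 0"
    using Tr_mult_add_scaled[OF c, of w x] w(2) by simp
  ultimately show ?thesis
    unfolding Tr_perp_def by simp
qed

lemma Tr_nondegenerate_on_Tr_perp:
  assumes "Tr_nondegenerate_on W"
  shows "Tr_nondegenerate_on (Tr_perp W w)"
  unfolding Tr_nondegenerate_on_def
proof (intro ballI impI)
  fix y
  assume y: "y \<in> Tr_perp W w" and orth: "\<forall>z\<in>Tr_perp W w. Tr (y * z) = 0"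
  have "Tr (y * x) = 0" if "x \<in> W" for x
  proof -
    let ?c = "- (Tr (w * x) / Tr (w ^ 2))"
    have c: "?c \<in> K"
      by auto
    have "y * (x + ?c * w) = y * x + ?c * (w * y)"
      by (simp add: algebra_simps)
    then have "Tr (y * (x + ?c * w)) = Tr (y * x) + ?c * Tr (w * y)"
      by (simp only: Tr_add Tr_mult_K[OF c])
    moreover have "Tr (y * (x + ?c * w)) = 0"
      using orth Tr_perp_projection[OF that] by blast
    moreover have "Tr (w * y) = 0"
      using y by (simp add: Tr_perp_def)
    ultimately show ?thesis
      by simp
  qed
  with assms y show "y = 0"
    unfolding Tr_nondegenerate_on_def Tr_perp_def by blast
qed

lemma bij_betw_Tr_perp_decomposition: "bij_betw (\<lambda>(c, y). y + c * w) (K \<times> Tr_perp W w) W"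
proof -
  define \<mu> where "\<mu> x = Tr (w * x) / Tr (w ^ 2)" for x
  have \<mu>_K: "\<mu> x \<in> K" for x
    unfolding \<mu>_def by auto
  have \<mu>_shift: "\<mu> (y + c * w) = c" if "c \<in> K" "y \<in> Tr_perp W w" for c y
    using that Tr_mult_add_scaled[of c w y] w(2) by (simp add: \<mu>_def Tr_perp_def)
  have shift_mem: "y + c * w \<in> W" if "c \<in> K" "y \<in> Tr_perp W w" for c y
    using that W w(1) unfolding K_subspace_def Tr_perp_def by blast
  have "x + (- \<mu> x) * w \<in> Tr_perp W w" if "x \<in> W" for x
    using Tr_perp_projection[OF that] by (simp add: \<mu>_def)
  then show ?thesis
    by (intro bij_betw_byWitness[where f' = "\<lambda>x. (\<mu> x, x + (- \<mu> x) * w)"])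
      (auto simp: \<mu>_K \<mu>_shift shift_mem)
qed

lemma card_eq_q_mult_card_Tr_perp: "card W = q * card (Tr_perp W w)"
  using bij_betw_same_card[OF bij_betw_Tr_perp_decomposition] card_K
  by (simp add: card_cartesian_product)

lemma card_Tr_square_level_decomposition:
  "card {x\<in>W. Tr (x ^ 2) = c} = (\<Sum>l\<in>K. card {y\<in>Tr_perp W w. Tr (y ^ 2) = c - Tr (w ^ 2) * l ^ 2})"
proof -
  have level: "Tr ((y + l * w) ^ 2) = c \<longleftrightarrow> Tr (y ^ 2) = c - Tr (w ^ 2) * l ^ 2"
    if "l \<in> K" "y \<in> Tr_perp W w" for l y
  proof -
    have "Tr ((y + l * w) ^ 2) = Tr (y ^ 2) + Tr (w ^ 2) * l ^ 2"
      using that Tr_square_add_scaled[of l y w] by (simp add: Tr_perp_def mult.commute)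
    then show ?thesis
      by (simp add: eq_diff_eq)
  qed
  have bij: "bij_betw (\<lambda>(l, y). y + l * w)
      {a\<in>K \<times> Tr_perp W w. Tr (snd a ^ 2) = c - Tr (w ^ 2) * fst a ^ 2} {x\<in>W. Tr (x ^ 2) = c}"
  proof (rule bij_betw_Collect[OF bij_betw_Tr_perp_decomposition])
    fix a assume "a \<in> K \<times> Tr_perp W w"
    then show "Tr (((\<lambda>(l, y). y + l * w) a) ^ 2) = c \<longleftrightarrow> Tr (snd a ^ 2) = c - Tr (w ^ 2) * fst a ^ 2"
      by (cases a) (simp add: level)
  qed
  have Sigma_eq: "{a\<in>K \<times> Tr_perp W w. Tr (snd a ^ 2) = c - Tr (w ^ 2) * fst a ^ 2}
      = (SIGMA l:K. {y\<in>Tr_perp W w. Tr (y ^ 2) = c - Tr (w ^ 2) * l ^ 2})"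
  proof (rule Set.set_eqI)
    fix a :: "'a \<times> 'a"
    show "a \<in> {a\<in>K \<times> Tr_perp W w. Tr (snd a ^ 2) = c - Tr (w ^ 2) * fst a ^ 2}
        \<longleftrightarrow> a \<in> (SIGMA l:K. {y\<in>Tr_perp W w. Tr (y ^ 2) = c - Tr (w ^ 2) * l ^ 2})"
      by (cases a) (simp only: mem_Collect_eq mem_Sigma_iff mem_Times_iff fst_conv snd_conv conj_assoc)
  qed
  from bij_betw_same_card[OF bij] show ?thesis
    unfolding Sigma_eq by simp
qed

end

text \<open>Gram--Schmidt for the trace form; \<open>card W = q ^ d\<close> says that \<open>W\<close> has \<open>K\<close>-dimension \<open>d\<close>.\<close>

lemma Tr_square_diagonalization:
  assumes "K_subspace W" and "Tr_nondegenerate_on W" and "card W = q ^ d"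
  shows "\<exists>ws. length ws = d \<and> set ws \<subseteq> W \<and> (\<forall>v\<in>set ws. Tr (v ^ 2) \<noteq> 0) \<and> Tr_orthogonal ws \<and>
    (\<forall>c\<in>K. card {x\<in>W. Tr (x ^ 2) = c} = diag_count K (map (\<lambda>v. Tr (v ^ 2)) ws) c)"
  using assms
proof (induction d arbitrary: W)
  case 0
  then have "0 \<in> W" "card W = 1"
    unfolding K_subspace_def by auto
  then have "W = {0}"
    by (metis card_1_singletonE singletonD)
  then have "{x\<in>W. Tr (x ^ 2) = c} = (if c = 0 then {0} else {})" for c
    by auto
  then have "card {x\<in>W. Tr (x ^ 2) = c} = diag_count K [] c" for c
    by simp
  then show ?case
    by (intro exI[of _ "[]"]) (simp add: Tr_orthogonal_def)
next
  case (Suc d)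
  have "card W > 1"
    using Suc.prems(3) one_less_power[OF q_gt_1, of "Suc d"] by simp
  then obtain w where w: "w \<in> W" "Tr (w ^ 2) \<noteq> 0"
    using exists_Tr_square_nonzero Suc.prems(1,2) by blast
  let ?W' = "Tr_perp W w"
  have "card ?W' = q ^ d"
    using card_eq_q_mult_card_Tr_perp[OF Suc.prems(1) w] Suc.prems(3) q_gt_1 by simp
  then obtain ws where ws: "length ws = d" "set ws \<subseteq> ?W'" "\<forall>v\<in>set ws. Tr (v ^ 2) \<noteq> 0"
      "Tr_orthogonal ws" "\<forall>c\<in>K. card {y\<in>?W'. Tr (y ^ 2) = c} = diag_count K (map (\<lambda>v. Tr (v ^ 2)) ws) c"
    using Suc.IH[OF K_subspace_Tr_perp[OF Suc.prems(1) w]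
        Tr_nondegenerate_on_Tr_perp[OF Suc.prems(1) w Suc.prems(2)]] by blast
  have "card {x\<in>W. Tr (x ^ 2) = c} = diag_count K (map (\<lambda>v. Tr (v ^ 2)) (w # ws)) c"
    if "c \<in> K" for c
  proof -
    have "card {x\<in>W. Tr (x ^ 2) = c} = (\<Sum>l\<in>K. card {y\<in>?W'. Tr (y ^ 2) = c - Tr (w ^ 2) * l ^ 2})"
      by (rule card_Tr_square_level_decomposition[OF Suc.prems(1) w])
    also have "\<dots> = (\<Sum>l\<in>K. diag_count K (map (\<lambda>v. Tr (v ^ 2)) ws) (c - Tr (w ^ 2) * l ^ 2))"
      using ws(5) that by (intro sum.cong) auto
    finally show ?thesis
      by simp
  qed
  moreover have "Tr_orthogonal (w # ws)"
    using ws(2,4) by (intro Tr_orthogonal_Cons) (auto simp: Tr_perp_def)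
  ultimately show ?case
    using ws w by (intro exI[of _ "w # ws"]) (auto simp: Tr_perp_def)
qed

definition moore_mat :: "'a list \<Rightarrow> 'a mat" where
  "moore_mat ws = mat m m (\<lambda>(k, i). ws ! i ^ q ^ k)"

lemma moore_mat_carrier: "moore_mat ws \<in> carrier_mat m m"
  by (simp add: moore_mat_def)

lemma transpose_moore_mat_mult:
  "transpose_mat (moore_mat ws) * moore_mat ws = mat m m (\<lambda>(i, j). Tr (ws ! i * ws ! j))"
  by (rule eq_matI)
    (simp_all add: moore_mat_def scalar_prod_def trace_qm_def atLeast0LessThan power_mult_distrib)

lemma map_mat_frobenius_moore_mat:
  "map_mat (\<lambda>x. x ^ q) (moore_mat ws) = mat m m (\<lambda>(k, i). moore_mat ws $$ (shift_cycle m k, i))"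
proof (rule eq_matI)
  fix k i
  assume "k < dim_row (mat m m (\<lambda>(k, i). moore_mat ws $$ (shift_cycle m k, i)))"
    and "i < dim_col (mat m m (\<lambda>(k, i). moore_mat ws $$ (shift_cycle m k, i)))"
  then have ki: "k < m" "i < m"
    by auto
  have "map_mat (\<lambda>x. x ^ q) (moore_mat ws) $$ (k, i) = ws ! i ^ q ^ Suc k"
    using ki by (simp add: moore_mat_def power_mult[symmetric] mult.commute)
  also have "\<dots> = moore_mat ws $$ (shift_cycle m k, i)"
  proof (cases "Suc k < m")
    case True
    with ki show ?thesis
      by (simp add: moore_mat_def shift_cycle_def)
  next
    case False
    with ki have "Suc k = m"
      by simp
    with ki show ?thesis
      by (simp add: moore_mat_def shift_cycle_def power_q_power_m)
  qed
  finally show "map_mat (\<lambda>x. x ^ q) (moore_mat ws) $$ (k, i)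
      = mat m m (\<lambda>(k, i). moore_mat ws $$ (shift_cycle m k, i)) $$ (k, i)"
    using ki by simp
qed (simp_all add: moore_mat_def)

text \<open>The Frobenius permutes the rows of the Moore matrix by an \<open>m\<close>-cycle, which is even for odd \<open>m\<close>.\<close>

lemma det_moore_mat_in_K:
  assumes "odd m"
  shows "det (moore_mat ws) \<in> K"
proof -
  interpret frobenius: comm_ring_hom "\<lambda>x::'a. x ^ q"
    by unfold_locales (use q_gt_1 frobenius_add[of _ _ 1] in \<open>simp_all add: power_mult_distrib\<close>)
  have "det (moore_mat ws) ^ q = det (map_mat (\<lambda>x. x ^ q) (moore_mat ws))"
    by simp
  also have "\<dots> = signof (shift_cycle m) * det (moore_mat ws)"
    unfolding map_mat_frobenius_moore_mat
    by (rule det_permute_rows[OF moore_mat_carrier shift_cycle_permutes[OF m_pos]])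
  also have "signof (shift_cycle m) = (1::'a)"
    using evenperm_shift_cycle[OF m_pos] assms by (simp add: sign_def)
  finally show ?thesis
    by (simp add: mem_K_iff)
qed

lemma prod_Tr_square_eq_det_moore_mat_square:
  assumes "length ws = m" and "Tr_orthogonal ws"
  shows "prod_list (map (\<lambda>v. Tr (v ^ 2)) ws) = det (moore_mat ws) ^ 2"
proof -
  let ?G = "mat m m (\<lambda>(i, j). Tr (ws ! i * ws ! j))"
  have "upper_triangular ?G"
    using assms by (auto simp: upper_triangular_def Tr_orthogonal_def)
  then have "det ?G = prod_list (diag_mat ?G)"
    by (rule det_upper_triangular[where n = m]) simp
  also have "diag_mat ?G = map (\<lambda>v. Tr (v ^ 2)) ws"
    using assms(1) by (auto simp: diag_mat_def power2_eq_square intro: nth_equalityI)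
  finally have "det ?G = prod_list (map (\<lambda>v. Tr (v ^ 2)) ws)" .
  moreover have "det ?G = det (moore_mat ws) ^ 2"
  proof -
    have "transpose_mat (moore_mat ws) \<in> carrier_mat m m"
      using moore_mat_carrier by simp
    then have "det (transpose_mat (moore_mat ws) * moore_mat ws)
        = det (transpose_mat (moore_mat ws)) * det (moore_mat ws)"
      by (rule det_mult[OF _ moore_mat_carrier])
    then show ?thesis
      using det_transpose[OF moore_mat_carrier] by (simp add: transpose_moore_mat_mult power2_eq_square)
  qed
  ultimately show ?thesis
    by simp
qed

lemma bij_betw_Tr_hyperplane_isotropic_lines:
  assumes s: "s \<in> K" "s \<noteq> 0" and t: "Tr (b ^ 2) = 0"
  shows "bij_betw (\<lambda>(l, z). z + l * b) (K \<times> {x. Tr (b * x) = s \<and> Tr (x ^ 2) = 0}) {x. Tr (b * x) = s}"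
proof -
  let ?S = "{x. Tr (b * x) = s \<and> Tr (x ^ 2) = 0}"
  define \<mu> where "\<mu> x = Tr (x ^ 2) / (2 * s)" for x
  have \<mu>_K: "\<mu> x \<in> K" for x
    using s unfolding \<mu>_def by auto
  have hyperplane: "Tr (b * (x + l * b)) = Tr (b * x)" if "l \<in> K" for x l
    using Tr_mult_add_scaled[OF that] t by simp
  have square: "Tr ((x + l * b) ^ 2) = Tr (x ^ 2) + 2 * l * Tr (b * x)" if "l \<in> K" for x l
    using Tr_square_add_scaled[OF that] t by simp
  have \<mu>_shift: "\<mu> (z + l * b) = l" if "l \<in> K" "z \<in> ?S" for l z
    using that square[OF that(1), of z] s(2) two_neq_zero by (simp add: \<mu>_def)
  have projection: "x - \<mu> x * b \<in> ?S" if "Tr (b * x) = s" for x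
  proof -
    have "Tr (b * (x - \<mu> x * b)) = Tr (b * x)"
      using hyperplane[OF K_uminus[OF \<mu>_K[of x]], of x] by simp
    moreover have "Tr ((x - \<mu> x * b) ^ 2) = Tr (x ^ 2) - 2 * \<mu> x * Tr (b * x)"
      using square[OF K_uminus[OF \<mu>_K[of x]], of x] by simp
    moreover have "2 * \<mu> x * s = Tr (x ^ 2)"
      using s(2) two_neq_zero by (simp add: \<mu>_def)
    ultimately show ?thesis
      using that by simp
  qed
  show ?thesis
  proof (rule bij_betw_byWitness[where f' = "\<lambda>x. (\<mu> x, x - \<mu> x * b)"])
    show "\<forall>a\<in>K \<times> ?S. (\<lambda>x. (\<mu> x, x - \<mu> x * b)) ((\<lambda>(l, z). z + l * b) a) = a"
      using \<mu>_shift by auto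
    show "\<forall>x\<in>{x. Tr (b * x) = s}. (\<lambda>(l, z). z + l * b) (\<mu> x, x - \<mu> x * b) = x"
      by simp
    show "(\<lambda>(l, z). z + l * b) ` (K \<times> ?S) \<subseteq> {x. Tr (b * x) = s}"
      using hyperplane by auto
    show "(\<lambda>x. (\<mu> x, x - \<mu> x * b)) ` {x. Tr (b * x) = s} \<subseteq> K \<times> ?S"
      using \<mu>_K projection by blast
  qed
qed

lemma card_Tr_hyperplane_isotropic_quadric:
  assumes b: "b \<noteq> 0" and s: "s \<in> K" "s \<noteq> 0" and t: "Tr (b ^ 2) = 0" and "m \<ge> 2"
  shows "card {x. Tr (b * x) = s \<and> Tr (x ^ 2) = 0} = q ^ (m - 2)"
proof -
  have "q ^ (m - 1) = q * card {x. Tr (b * x) = s \<and> Tr (x ^ 2) = 0}"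
    using bij_betw_same_card[OF bij_betw_Tr_hyperplane_isotropic_lines[OF s t]]
      card_Tr_mult_fiber[OF b s(1)] card_K by (simp add: card_cartesian_product)
  moreover have "q ^ (m - 1) = q * q ^ (m - 2)"
    using \<open>m \<ge> 2\<close> by (metis Suc_diff_Suc Suc_1 diff_Suc_1 less_le_trans lessI power_Suc)
  ultimately show ?thesis
    using q_gt_1 by simp
qed

lemma card_Tr_hyperplane_quadric_eq_card_Tr_perp_level:
  assumes s: "s \<in> K" and t: "Tr (b ^ 2) \<noteq> 0"
  shows "card {x. Tr (b * x) = s \<and> Tr (x ^ 2) = 0}
    = card {y\<in>Tr_perp UNIV b. Tr (y ^ 2) = - (s ^ 2 / Tr (b ^ 2))}"
proof -
  define \<nu> where "\<nu> = s / Tr (b ^ 2)"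
  have \<nu>: "\<nu> \<in> K"
    using s unfolding \<nu>_def by auto
  have "\<nu> * Tr (b ^ 2) = s" "\<nu> ^ 2 * Tr (b ^ 2) = s ^ 2 / Tr (b ^ 2)"
    using t unfolding \<nu>_def by (simp_all add: power2_eq_square)
  then have hyperplane: "Tr (b * (y + \<nu> * b)) = Tr (b * y) + s"
    and square: "Tr ((y + \<nu> * b) ^ 2) = Tr (y ^ 2) + 2 * \<nu> * Tr (b * y) + s ^ 2 / Tr (b ^ 2)" for y
    using Tr_mult_add_scaled[OF \<nu>, of b y] Tr_square_add_scaled[OF \<nu>, of y b] by simp_all
  have "bij_betw (\<lambda>y. y + \<nu> * b) {y\<in>UNIV. Tr (b * y) = 0 \<and> Tr (y ^ 2) = - (s ^ 2 / Tr (b ^ 2))}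
      {x\<in>UNIV. Tr (b * x) = s \<and> Tr (x ^ 2) = 0}"
  proof (rule bij_betw_Collect)
    show "bij_betw (\<lambda>y. y + \<nu> * b) UNIV UNIV"
      by (rule bij_betw_byWitness[where f' = "\<lambda>x. x - \<nu> * b"]) auto
  qed (auto simp: hyperplane square eq_neg_iff_add_eq_0)
  then show ?thesis
    using bij_betw_same_card by (fastforce simp: Tr_perp_def)
qed

lemma card_Tr_perp_UNIV:
  assumes "Tr (b ^ 2) \<noteq> 0"
  shows "card (Tr_perp UNIV b) = q ^ (m - 1)"
proof -
  have "card (UNIV :: 'a set) = q * card (Tr_perp UNIV b)"
    using assms by (intro card_eq_q_mult_card_Tr_perp[OF K_subspace_UNIV]) auto
  moreover have "q ^ m = q * q ^ (m - 1)"
    using m_pos by (simp add: power_eq_if)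
  ultimately have "q * card (Tr_perp UNIV b) = q * q ^ (m - 1)"
    using card_UNIV by linarith
  then show ?thesis
    using q_gt_1 by simp
qed

text \<open>Prepending \<open>b\<close> gives an orthogonal list of length \<open>m\<close>, whose product of the \<open>Tr (v ^ 2)\<close>
  is the square of its Moore determinant, an element of \<open>K\<close>.\<close>

lemma eta_prod_Tr_square_Tr_perp:
  assumes "odd m" and t: "Tr (b ^ 2) \<noteq> 0"
    and ws: "length ws = m - 1" "set ws \<subseteq> Tr_perp UNIV b" "\<forall>v\<in>set ws. Tr (v ^ 2) \<noteq> 0"
      "Tr_orthogonal ws"
  shows "eta (prod_list (map (\<lambda>v. Tr (v ^ 2)) ws)) = eta (Tr (b ^ 2))"
proof -
  define P where "P = prod_list (map (\<lambda>v. Tr (v ^ 2)) ws)"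
  define D where "D = det (moore_mat (b # ws))"
  have P: "P \<in> K" "P \<noteq> 0"
    using ws(3) unfolding P_def by (induction ws) auto
  have "Tr_orthogonal (b # ws)"
    using ws(2,4) by (intro Tr_orthogonal_Cons) (auto simp: Tr_perp_def)
  then have TP: "Tr (b ^ 2) * P = D ^ 2"
    using prod_Tr_square_eq_det_moore_mat_square[of "b # ws"] ws(1) m_pos
    unfolding P_def D_def by simp
  then have "D \<noteq> 0"
    using t P(2) by auto
  then have "eta (Tr (b ^ 2) * P) = 1"
    unfolding TP D_def by (rule eta_square[OF det_moore_mat_in_K[OF \<open>odd m\<close>]])
  then have "eta (Tr (b ^ 2)) * eta P = 1"
    using eta_mult[OF Tr_in_K P(1)] by simp
  then show ?thesis
    using eta_mult_self[OF t] unfolding P_def[symmetric] by (metis mult.left_commute mult_1_right)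
qed

lemma card_Tr_hyperplane_anisotropic_quadric:
  assumes s: "s \<in> K" "s \<noteq> 0" and t: "Tr (b ^ 2) \<noteq> 0" and "m \<ge> 3" and "odd m"
  shows "int (card {x. Tr (b * x) = s \<and> Tr (x ^ 2) = 0})
    = int q ^ (m - 2) - eta (- 1) ^ ((m - 1) div 2) * eta (Tr (b ^ 2)) * int q ^ ((m - 3) div 2)"
proof -
  define k where "k = (m - 1) div 2"
  define c where "c = - (s ^ 2 / Tr (b ^ 2))"
  have c: "c \<in> K" "c \<noteq> 0"
    using s t unfolding c_def by auto
  have k: "m - 1 = 2 * k" "k \<ge> 1" "2 * k - 1 = m - 2" "k - 1 = (m - 3) div 2"
    unfolding k_def using \<open>m \<ge> 3\<close> \<open>odd m\<close> by (auto elim!: oddE)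
  obtain ws where ws: "length ws = m - 1" "set ws \<subseteq> Tr_perp UNIV b" "\<forall>v\<in>set ws. Tr (v ^ 2) \<noteq> 0"
      "Tr_orthogonal ws"
      "\<forall>c\<in>K. card {y\<in>Tr_perp UNIV b. Tr (y ^ 2) = c} = diag_count K (map (\<lambda>v. Tr (v ^ 2)) ws) c"
    using Tr_square_diagonalization[OF K_subspace_Tr_perp Tr_nondegenerate_on_Tr_perp card_Tr_perp_UNIV]
      K_subspace_UNIV Tr_nondegenerate_on_UNIV t by blast
  have coeffs: "set (map (\<lambda>v. Tr (v ^ 2)) ws) \<subseteq> K - {0}"
    using ws(3) by auto
  have "int (card {x. Tr (b * x) = s \<and> Tr (x ^ 2) = 0}) = int (diag_count K (map (\<lambda>v. Tr (v ^ 2)) ws) c)"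
    using card_Tr_hyperplane_quadric_eq_card_Tr_perp_level[OF s(1) t] ws(5) c(1)
    unfolding c_def by simp
  also have "\<dots> = int q ^ (m - 2)
      - eta ((- 1) ^ k * prod_list (map (\<lambda>v. Tr (v ^ 2)) ws)) * int q ^ ((m - 3) div 2)"
    using diag_count_even[OF k(2) _ coeffs c(1)] ws(1) c(2) k by simp
  also have "eta ((- 1) ^ k * prod_list (map (\<lambda>v. Tr (v ^ 2)) ws)) = eta (- 1) ^ k * eta (Tr (b ^ 2))"
  proof -
    have "prod_list (map (\<lambda>v. Tr (v ^ 2)) ws) \<in> K"
      using coeffs by (intro prod_list_in_K) auto
    then have "eta ((- 1) ^ k * prod_list (map (\<lambda>v. Tr (v ^ 2)) ws))
        = eta (- 1) ^ k * eta (prod_list (map (\<lambda>v. Tr (v ^ 2)) ws))"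
      by (simp add: eta_mult[OF K_power[OF K_uminus[OF K_one]]] eta_power[OF K_uminus[OF K_one]])
    then show ?thesis
      using eta_prod_Tr_square_Tr_perp[OF \<open>odd m\<close> t ws(1-4)] by simp
  qed
  finally show ?thesis
    unfolding k_def by (simp add: mult.assoc)
qed

lemma eta_minus_one_power_half_pred:
  assumes "odd m"
  shows "eta (- 1) ^ ((m - 1) div 2) = (- 1) ^ (e * (p - 1) * (m + 3) div 4)"
proof -
  define u where "u = (p - 1) div 2"
  define k where "k = (m - 1) div 2"
  have "eta (- 1) = (- 1) ^ (e * u)"
    using eta_minus_one minus_one_power_half_pred_power[OF odd_p, of e] q_def
    unfolding half_q_def u_def by simp
  moreover have "e * (p - 1) * (m + 3) = 4 * (e * u * k + 2 * (e * u))"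
    using odd_p assms unfolding u_def k_def by (auto elim!: oddE simp: algebra_simps)
  ultimately show ?thesis
    unfolding k_def[symmetric] by (simp add: power_add power_mult)
qed

end

theorem lemma3p17:
  fixes p e m q :: nat and s b :: "'a::{finite,field}"
  assumes "prime p" and "odd p" and "e \<ge> 1" and "q = p ^ e"
    and "m \<ge> 3" and "odd m"
    and "card (UNIV :: 'a set) = q ^ m"
    and "s \<in> subfield_q q" and "s \<noteq> 0"
    and "b \<noteq> 0"
  defines "l \<equiv> e * (p - 1) * (m + 3) div 4"
    and "N \<equiv> card {x :: 'a. trace_qm q m (b * x) = s \<and> trace_qm q m (x ^ 2) = 0}"
  shows "(trace_qm q m (b ^ 2) = 0 \<longrightarrow> int N = int q ^ (m - 2))
       \<and> (trace_qm q m (b ^ 2) \<noteq> 0 \<longrightarrow>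
            int N = int q ^ (m - 2) - (-1) ^ l * eta_q q (trace_qm q m (b ^ 2)) * int q ^ ((m - 3) div 2))"
proof -
  interpret odd_finite_field_extension p e m q "subfield_q q :: 'a set"
    by unfold_locales (use assms in auto)
  have sign: "(- 1) ^ l = eta (- 1) ^ ((m - 1) div 2)"
    unfolding l_def using eta_minus_one_power_half_pred[OF \<open>odd m\<close>] by simp
  show ?thesis
  proof (intro conjI impI)
    assume "Tr (b ^ 2) = 0"
    moreover have "m \<ge> 2"
      using \<open>m \<ge> 3\<close> by simp
    ultimately show "int N = int q ^ (m - 2)"
      using card_Tr_hyperplane_isotropic_quadric[OF \<open>b \<noteq> 0\<close> \<open>s \<in> subfield_q q\<close> \<open>s \<noteq> 0\<close>]
      unfolding N_def by simp
  next
    assume "Tr (b ^ 2) \<noteq> 0"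
    then show "int N = int q ^ (m - 2) - (- 1) ^ l * eta (Tr (b ^ 2)) * int q ^ ((m - 3) div 2)"
      unfolding N_def sign
      by (rule card_Tr_hyperplane_anisotropic_quadric[OF \<open>s \<in> subfield_q q\<close> \<open>s \<noteq> 0\<close> _ \<open>m \<ge> 3\<close> \<open>odd m\<close>])
  qed
qed

end
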